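(* For all integers $n>1$ and $k>n$ we have $3F(n,k)\le2F(n,k+1)$, with equality if and only if $n=2$ and $k=4$.
   Context: For positive integers $n,k$, the generalized Fibonacci numbers are defined by $F(n,k)=0$ if $1\le k<n$, $F(n,k)=1$ if $k=n$, and $F(n,k)=\sum_{j=1}^nF(n,k-j)$ if $k>n$. *)

theory Defs
  imports Main
begin

text \<open>Generalized Fibonacci numbers F(n,k). The paper defines them for positive n, k;
  the value at k = 0 is an irrelevant artefact of totality.\<close>
function genfib :: "nat \<Rightarrow> nat \<Rightarrow> nat" where
  "genfib n k = (if k < n then 0 else if k = n then 1
                 else (\<Sum>j=1..n. genfib n (k - j)))"
  by auto
termination
  by (relation "measure (\<lambda>(n,k). k)") auto

end

theory Submission
  imports Defs
begin

text \<open>The recurrence telescopes to \<open>F(n,k+1) = 2F(n,k) - F(n,k-n)\<close>, so the inequality is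
  equivalent to \<open>2F(n,k-n) \<le> F(n,k)\<close>. For \<open>k > 2n\<close> this holds strictly because
  \<open>F(n,k) \<ge> F(n,k-1) + F(n,k-2) > 2F(n,k-2) \<ge> 2F(n,k-n)\<close>; for \<open>k < 2n\<close> the left side vanishes;
  and for \<open>k = 2n\<close> the closed form \<open>F(n,n+j) = 2^(j-1)\<close> \<open>(1 \<le> j \<le> n)\<close> gives
  \<open>2 \<le> 2^(n-1)\<close>, with equality exactly for \<open>n = 2\<close>.\<close>

declare genfib.simps [simp del]

lemma genfib_below [simp]: "k < n \<Longrightarrow> genfib n k = 0"
  by (subst genfib.simps) simp

lemma genfib_diag [simp]: "genfib n n = 1"
  by (subst genfib.simps) simp

lemma genfib_above: "n < k \<Longrightarrow> genfib n k = (\<Sum>j=1..n. genfib n (k - j))"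
  by (subst genfib.simps) simp

lemma mono_genfib:
  assumes "0 < n"
  shows "mono (genfib n)"
  unfolding mono_iff_le_Suc
proof
  fix m
  show "genfib n m \<le> genfib n (Suc m)"
  proof (cases "m < n")
    case False
    have "genfib n (Suc m - 1) \<le> (\<Sum>j=1..n. genfib n (Suc m - j))"
      by (rule member_le_sum) (use assms in auto)
    with False show ?thesis
      by (simp add: genfib_above)
  qed simp
qed

lemma genfib_pos: "0 < n \<Longrightarrow> n \<le> k \<Longrightarrow> 0 < genfib n k"
  using monoD [OF mono_genfib, of n n k] by simp

lemma genfib_Suc_add_shift:
  assumes "0 < n" "n < k"
  shows "genfib n (Suc k) + genfib n (k - n) = 2 * genfib n k"
proof -
  obtain p where p: "n = Suc p"
    using assms by (cases n) auto
  have "genfib n (Suc k) = genfib n k + (\<Sum>j=Suc 1..Suc p. genfib n (Suc k - j))"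
    using assms p by (simp add: genfib_above sum.atLeast_Suc_atMost)
  also have "(\<Sum>j=Suc 1..Suc p. genfib n (Suc k - j)) = (\<Sum>j=1..p. genfib n (k - j))"
    by (simp only: sum.shift_bounds_cl_Suc_ivl) simp
  also have "(\<Sum>j=1..p. genfib n (k - j)) = genfib n k - genfib n (k - n)"
    using assms p by (simp add: genfib_above)
  finally show ?thesis
    using assms p by (simp add: genfib_above)
qed

lemma genfib_Suc_diag: "0 < n \<Longrightarrow> genfib n (Suc n) = 1"
  by (auto simp: genfib_above sum.atLeast_Suc_atMost intro!: sum.neutral)

lemma genfib_Suc_diag_add:
  assumes "j < n"
  shows "genfib n (Suc (n + j)) = 2 ^ j"
  using assms
proof (induction j)
  case 0
  then show ?case by (simp add: genfib_Suc_diag)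
next
  case (Suc j)
  have "genfib n (Suc (Suc (n + j))) + genfib n (Suc j) = 2 * genfib n (Suc (n + j))"
    using genfib_Suc_add_shift [of n "Suc (n + j)"] Suc.prems by simp
  with Suc show ?case by simp
qed

lemma genfib_ge_two_predecessors:
  assumes "2 \<le> n" "n < m"
  shows "genfib n (m - 1) + genfib n (m - 2) \<le> genfib n m"
proof -
  have "genfib n (m - 1) + genfib n (m - 2) = (\<Sum>j\<in>{1,2}. genfib n (m - j))"
    by simp
  also have "\<dots> \<le> (\<Sum>j=1..n. genfib n (m - j))"
    by (rule sum_mono2) (use assms in auto)
  finally show ?thesis
    using assms by (simp add: genfib_above)
qed

lemma genfib_less_Suc:
  assumes "2 \<le> n" "n < m"
  shows "genfib n m < genfib n (Suc m)"
proof -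
  have "genfib n m + genfib n (m - 1) \<le> genfib n (Suc m)"
    using genfib_ge_two_predecessors [of n "Suc m"] assms by simp
  moreover have "0 < genfib n (m - 1)"
    using genfib_pos [of n "m - 1"] assms by simp
  ultimately show ?thesis by simp
qed

lemma genfib_double_shift_less:
  assumes "1 < n" "n < k" "\<not> (n = 2 \<and> k = 4)"
  shows "2 * genfib n (k - n) < genfib n k"
proof -
  consider "k < 2 * n" | "k = 2 * n" | "2 * n < k" by linarith
  then show ?thesis
  proof cases
    case 1
    then show ?thesis
      using genfib_pos [of n k] assms by simp
  next
    case 2
    then have "3 \<le> n" using assms by auto
    then have "2 < (2::nat) ^ (n - 1)"
      using power_strict_increasing [of 1 "n - 1" "2::nat"] by simp
    moreover have "genfib n k = 2 ^ (n - 1)"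
      using genfib_Suc_diag_add [of "n - 1" n] 2 assms by (simp add: mult_2)
    ultimately show ?thesis
      using 2 by (simp add: mult_2)
  next
    case 3
    have "genfib n (k - 2) < genfib n (k - 1)"
      using genfib_less_Suc [of n "k - 2"] 3 assms by (simp add: Suc_diff_Suc numeral_2_eq_2)
    moreover have "genfib n (k - n) \<le> genfib n (k - 2)"
      using monoD [OF mono_genfib, of n "k - n" "k - 2"] assms by simp
    moreover have "genfib n (k - 1) + genfib n (k - 2) \<le> genfib n k"
      using genfib_ge_two_predecessors assms by simp
    ultimately show ?thesis by simp
  qed
qed

theorem mainTheorem16:
  fixes n k :: nat
  assumes "n > 1" and "k > n"
  shows "3 * genfib n k \<le> 2 * genfib n (k + 1)
         \<and> (3 * genfib n k = 2 * genfib n (k + 1) \<longleftrightarrow> n = 2 \<and> k = 4)"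
proof -
  have recurrence: "genfib n (k + 1) + genfib n (k - n) = 2 * genfib n k"
    using genfib_Suc_add_shift assms by simp
  show ?thesis
  proof (cases "n = 2 \<and> k = 4")
    case True
    have "genfib 2 4 = 2"
      using genfib_Suc_diag_add [of 1 2] by (simp add: numeral_eq_Suc)
    with True recurrence show ?thesis by simp
  next
    case False
    with genfib_double_shift_less assms recurrence show ?thesis by fastforce
  qed
qed

end
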